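(* Let $(P,\leqslant)$ be a finite partially ordered set. Then $P$ admits a selection map if and only if the associated Kolmogorov space of $P$ has the universal fixed point property.
   Context: The associated Kolmogorov space of a finite poset $P$ is the set $P$ with the topology whose open sets are the down-sets, i.e. subsets $U$ such that $x\leqslant x'$ and $x'\in U$ imply $x\in U$. Let $M(P)$ be the set of order-preserving maps $P\to P$, partially ordered pointwise ($f\leqslant g$ iff $f(x)\leqslant g(x)$ for all $x$). A selection map for $P$ is an order-preserving map $\Phi\colon M(P)\to P$ such that $f(\Phi(f))=\Phi(f)$ for all $f\in M(P)$. A topological space $X$ has the universal fixed point property if for every topological space $T$ and every continuous map $f\colon T\times X\to X$ there exists a continuous map $p\colon T\to X$ with $f(t,p(t))=p(t)$ for all $t\in T$. *)

theory Defs
  imports "HOL-Analysis.Analysis"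
begin

text \<open>The finite poset P is modelled as a type of class finite and order (P = UNIV).\<close>

definition is_downset :: "'a::order set \<Rightarrow> bool" where
  "is_downset U \<longleftrightarrow> (\<forall>x x'. x \<le> x' \<longrightarrow> x' \<in> U \<longrightarrow> x \<in> U)"

lemma istopology_downsets: "istopology (is_downset :: 'a::order set \<Rightarrow> bool)"
  unfolding istopology_def is_downset_def by blast

definition kolmogorov_space :: "'a::order topology" where
  "kolmogorov_space = topology is_downset"

lemma openin_kolmogorov_space: "openin kolmogorov_space U \<longleftrightarrow> is_downset U"
  unfolding kolmogorov_space_def by (simp add: topology_inverse'[OF istopology_downsets])

definition selection_map :: "(('a::order \<Rightarrow> 'a) \<Rightarrow> 'a) \<Rightarrow> bool" where
  "selection_map \<Phi> \<longleftrightarrow>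
     (\<forall>f g. mono f \<longrightarrow> mono g \<longrightarrow> (\<forall>x. f x \<le> g x) \<longrightarrow> \<Phi> f \<le> \<Phi> g) \<and>
     (\<forall>f. mono f \<longrightarrow> f (\<Phi> f) = \<Phi> f)"

text \<open>Universal fixed point property, with test spaces T ranging over topologies on type 't.\<close>
definition ufpp :: "'a topology \<Rightarrow> 't itself \<Rightarrow> bool" where
  "ufpp X _ \<longleftrightarrow>
     (\<forall>(T::'t topology) f. continuous_map (prod_topology T X) X f \<longrightarrow>
        (\<exists>p. continuous_map T X p \<and> (\<forall>t\<in>topspace T. f (t, p t) = p t)))"

end

theory Submission
  imports Defs
begin

text \<open>If \<Phi> is a selection map and f is continuous on T \<times> P, put p t = \<Phi> (f (t, -)). Continuity
  of f means that every t has a neighbourhood on which f (t', -) \<le> f (t, -) pointwise (an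
  intersection over the finitely many points of P), so monotonicity of \<Phi> gives p t' \<le> p t
  there, i.e. p is continuous. Conversely, give M(P) its own down-set topology; evaluation
  M(P) \<times> P \<rightarrow> P is then continuous, and a continuous fixed-point section of it is a selection
  map because continuous maps between such spaces are monotone.\<close>

lemma topspace_kolmogorov_space [simp]: "topspace kolmogorov_space = UNIV"
proof -
  have "openin kolmogorov_space UNIV"
    by (simp add: openin_kolmogorov_space is_downset_def)
  then show ?thesis
    using openin_subset by blast
qed

lemma is_downset_atMost: "is_downset {..a}"
  unfolding is_downset_def by (auto intro: order_trans)

lemma openin_kolmogorov_space_atMost: "openin kolmogorov_space {..a}"
  by (simp add: openin_kolmogorov_space is_downset_atMost)

lemma is_downset_eq_UN_atMost: "is_downset U \<Longrightarrow> U = (\<Union>a\<in>U. {..a})"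
  unfolding is_downset_def by auto

lemma continuous_map_kolmogorov_space_iff:
  "continuous_map T kolmogorov_space p \<longleftrightarrow> (\<forall>a. openin T {t \<in> topspace T. p t \<le> a})"
proof
  assume "continuous_map T kolmogorov_space p"
  then show "\<forall>a. openin T {t \<in> topspace T. p t \<le> a}"
    using openin_continuous_map_preimage[OF _ openin_kolmogorov_space_atMost] by auto
next
  assume atMost_open: "\<forall>a. openin T {t \<in> topspace T. p t \<le> a}"
  have "openin T {t \<in> topspace T. p t \<in> U}" if "is_downset U" for U
  proof -
    have "{t \<in> topspace T. p t \<in> U} = (\<Union>a\<in>U. {t \<in> topspace T. p t \<le> a})"
      using is_downset_eq_UN_atMost[OF that] by auto
    then show ?thesis
      using atMost_open by auto
  qed
  then show "continuous_map T kolmogorov_space p"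
    by (simp add: continuous_map_def openin_kolmogorov_space)
qed

lemma continuous_map_kolmogorov_space_imp_mono_on:
  assumes "continuous_map (subtopology kolmogorov_space S) kolmogorov_space p"
  shows "mono_on S p"
proof (rule mono_onI)
  fix x y assume "x \<in> S" "y \<in> S" "x \<le> y"
  have "openin (subtopology kolmogorov_space S) {z \<in> S. p z \<le> p y}"
    using assms by (simp add: continuous_map_kolmogorov_space_iff)
  then obtain V where "is_downset V" "{z \<in> S. p z \<le> p y} = S \<inter> V"
    by (auto simp: openin_subtopology openin_kolmogorov_space)
  with \<open>x \<in> S\<close> \<open>y \<in> S\<close> \<open>x \<le> y\<close> show "p x \<le> p y"
    unfolding is_downset_def by blast
qed

lemma continuous_map_prod_kolmogorov_space_le:
  assumes f: "continuous_map (prod_topology T kolmogorov_space) kolmogorov_space f"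
    and "t \<in> topspace T" "x \<le> y"
  shows "\<exists>W. openin T W \<and> t \<in> W \<and> (\<forall>t'\<in>W. f (t', x) \<le> f (t, y))"
proof -
  let ?S = "{z \<in> topspace (prod_topology T kolmogorov_space). f z \<le> f (t, y)}"
  have "openin (prod_topology T kolmogorov_space) ?S"
    using f by (simp add: continuous_map_kolmogorov_space_iff)
  moreover have "(t, y) \<in> ?S"
    using \<open>t \<in> topspace T\<close> by simp
  ultimately obtain W V where "openin T W" "openin kolmogorov_space V" "t \<in> W" "y \<in> V"
      and "W \<times> V \<subseteq> ?S"
    unfolding openin_prod_topology_alt by meson
  moreover have "x \<in> V"
    using \<open>openin kolmogorov_space V\<close> \<open>y \<in> V\<close> \<open>x \<le> y\<close>
    unfolding openin_kolmogorov_space is_downset_def by blast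
  ultimately show ?thesis
    by blast
qed

lemma continuous_map_prod_kolmogorov_space_mono:
  assumes "continuous_map (prod_topology T kolmogorov_space) kolmogorov_space f"
    and "t \<in> topspace T"
  shows "mono (\<lambda>x. f (t, x))"
  using continuous_map_prod_kolmogorov_space_le[OF assms] by (auto intro: monoI)

lemma continuous_map_prod_kolmogorov_space_nhd_le:
  fixes f :: "'t \<times> 'a::{finite,order} \<Rightarrow> 'a"
  assumes f: "continuous_map (prod_topology T kolmogorov_space) kolmogorov_space f"
    and t: "t \<in> topspace T"
  shows "\<exists>W. openin T W \<and> t \<in> W \<and> (\<forall>t'\<in>W. \<forall>x. f (t', x) \<le> f (t, x))"
proof -
  obtain W where W: "\<And>x. openin T (W x) \<and> t \<in> W x \<and> (\<forall>t'\<in>W x. f (t', x) \<le> f (t, x))"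
    using continuous_map_prod_kolmogorov_space_le[OF f t order_refl] by metis
  have "openin T (\<Inter>(range W))"
    using W by (intro openin_Inter) auto
  with W show ?thesis
    by (intro exI[of _ "\<Inter>(range W)"]) auto
qed

lemma selection_map_imp_ufpp:
  fixes \<Phi> :: "('a::{finite,order} \<Rightarrow> 'a) \<Rightarrow> 'a"
  assumes "selection_map \<Phi>"
  shows "ufpp (kolmogorov_space :: 'a topology) TYPE('t)"
  unfolding ufpp_def
proof (intro allI impI)
  fix T :: "'t topology" and f :: "'t \<times> 'a \<Rightarrow> 'a"
  assume f: "continuous_map (prod_topology T kolmogorov_space) kolmogorov_space f"
  define p where "p t = \<Phi> (\<lambda>x. f (t, x))" for t
  have \<Phi>_mono: "\<And>g h. mono g \<Longrightarrow> mono h \<Longrightarrow> (\<forall>x. g x \<le> h x) \<Longrightarrow> \<Phi> g \<le> \<Phi> h"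
    and \<Phi>_fixed: "\<And>g. mono g \<Longrightarrow> g (\<Phi> g) = \<Phi> g"
    using assms unfolding selection_map_def by blast+
  note f_mono = continuous_map_prod_kolmogorov_space_mono[OF f]
  have "openin T {t \<in> topspace T. p t \<le> a}" for a
  proof (rule openin_subopen[THEN iffD2], intro ballI)
    fix t assume "t \<in> {t \<in> topspace T. p t \<le> a}"
    then have t: "t \<in> topspace T" and "p t \<le> a"
      by auto
    obtain W where "openin T W" "t \<in> W" and W: "\<forall>t'\<in>W. \<forall>x. f (t', x) \<le> f (t, x)"
      using continuous_map_prod_kolmogorov_space_nhd_le[OF f t] by blast
    have "p t' \<le> a" if "t' \<in> W" for t'
    proof -
      have "t' \<in> topspace T"
        using \<open>openin T W\<close> that openin_subset by blast
      then have "p t' \<le> p t"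
        unfolding p_def using W that t by (intro \<Phi>_mono f_mono) auto
      with \<open>p t \<le> a\<close> show ?thesis
        by simp
    qed
    with \<open>openin T W\<close> \<open>t \<in> W\<close> show "\<exists>W. openin T W \<and> t \<in> W \<and> W \<subseteq> {t \<in> topspace T. p t \<le> a}"
      using openin_subset by blast
  qed
  then have "continuous_map T kolmogorov_space p"
    by (simp add: continuous_map_kolmogorov_space_iff)
  moreover have "\<forall>t\<in>topspace T. f (t, p t) = p t"
    unfolding p_def using \<Phi>_fixed f_mono by blast
  ultimately show "\<exists>p. continuous_map T kolmogorov_space p \<and> (\<forall>t\<in>topspace T. f (t, p t) = p t)"
    by blast
qed

text \<open>M(P) is the subspace of monotone maps of the Kolmogorov space of all maps P \<Rightarrow> P under
  the pointwise order; its open sets are exactly the down-sets of M(P).\<close>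

lemma continuous_map_evaluation_monotone_maps:
  "continuous_map (prod_topology (subtopology kolmogorov_space {g. mono g}) kolmogorov_space)
     kolmogorov_space (\<lambda>(g :: 'a::order \<Rightarrow> 'a, x). g x)"
  unfolding continuous_map_kolmogorov_space_iff openin_prod_topology_alt
proof (intro allI impI)
  let ?M = "subtopology kolmogorov_space {g :: 'a \<Rightarrow> 'a. mono g}"
  fix a :: 'a and g :: "'a \<Rightarrow> 'a" and x :: 'a
  assume "(g, x) \<in> {z \<in> topspace (prod_topology ?M kolmogorov_space). (case z of (g, x) \<Rightarrow> g x) \<le> a}"
  then have "mono g" "g x \<le> a"
    by auto
  have "openin ?M ({g. mono g} \<inter> {..g})"
    unfolding openin_subtopology using openin_kolmogorov_space_atMost by blast
  moreover have "({g. mono g} \<inter> {..g}) \<times> {..x} \<subseteq>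
      {z \<in> topspace (prod_topology ?M kolmogorov_space). (case z of (g, x) \<Rightarrow> g x) \<le> a}"
  proof clarsimp
    fix g' x' assume "mono g'" "g' \<le> g" "x' \<le> x"
    then show "g' x' \<le> a"
      using monoD[OF \<open>mono g'\<close> \<open>x' \<le> x\<close>] le_funD[OF \<open>g' \<le> g\<close>, of x] \<open>g x \<le> a\<close> by simp
  qed
  ultimately show "\<exists>U V. openin ?M U \<and> openin kolmogorov_space V \<and> g \<in> U \<and> x \<in> V \<and>
      U \<times> V \<subseteq> {z \<in> topspace (prod_topology ?M kolmogorov_space). (case z of (g, x) \<Rightarrow> g x) \<le> a}"
    using \<open>mono g\<close> openin_kolmogorov_space_atMost by blast
qed

lemma ufpp_imp_selection_map:
  assumes "ufpp (kolmogorov_space :: 'a::order topology) TYPE('a \<Rightarrow> 'a)"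
  shows "\<exists>\<Phi>. selection_map (\<Phi> :: ('a \<Rightarrow> 'a) \<Rightarrow> 'a)"
proof -
  obtain p where p: "continuous_map (subtopology kolmogorov_space {g. mono g}) kolmogorov_space p"
      and fixed: "\<forall>g\<in>topspace (subtopology kolmogorov_space {g :: 'a \<Rightarrow> 'a. mono g}). g (p g) = p g"
    using assms continuous_map_evaluation_monotone_maps unfolding ufpp_def
    by (metis (mono_tags, lifting) case_prod_conv)
  have p_mono: "mono_on {g. mono g} p"
    using continuous_map_kolmogorov_space_imp_mono_on[OF p] .
  have "selection_map p"
    unfolding selection_map_def
  proof (intro conjI allI impI)
    fix f g :: "'a \<Rightarrow> 'a"
    assume "mono f" "mono g" "\<forall>x. f x \<le> g x"
    then show "p f \<le> p g"
      by (intro mono_onD[OF p_mono]) (auto intro: le_funI)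
  next
    fix f :: "'a \<Rightarrow> 'a"
    assume "mono f"
    then show "f (p f) = p f"
      using fixed by simp
  qed
  then show ?thesis
    by blast
qed

theorem proposition8p1:
  shows "(\<exists>\<Phi>. selection_map (\<Phi> :: ('a::{finite,order} \<Rightarrow> 'a) \<Rightarrow> 'a)) \<longleftrightarrow>
         (ufpp (kolmogorov_space :: 'a topology) TYPE('t) \<and>
          ufpp (kolmogorov_space :: 'a topology) TYPE('a \<Rightarrow> 'a))"
proof
  assume "\<exists>\<Phi>. selection_map (\<Phi> :: ('a \<Rightarrow> 'a) \<Rightarrow> 'a)"
  then obtain \<Phi> :: "('a \<Rightarrow> 'a) \<Rightarrow> 'a" where "selection_map \<Phi>" ..
  then show "ufpp (kolmogorov_space :: 'a topology) TYPE('t) \<and>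
      ufpp (kolmogorov_space :: 'a topology) TYPE('a \<Rightarrow> 'a)"
    by (intro conjI selection_map_imp_ufpp)
next
  assume "ufpp (kolmogorov_space :: 'a topology) TYPE('t) \<and>
      ufpp (kolmogorov_space :: 'a topology) TYPE('a \<Rightarrow> 'a)"
  then show "\<exists>\<Phi>. selection_map (\<Phi> :: ('a \<Rightarrow> 'a) \<Rightarrow> 'a)"
    by (elim conjE) (rule ufpp_imp_selection_map)
qed

end
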